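(* Let $G$ be a graph with $n$ vertices. Run Algorithm LexColor on $G$ (arbitrary tie-breaking), let $\ell$ be the number of colors used, and run Algorithm Clique on $G$ with this coloring; suppose that at some step the selected vertex $x$ of color $c$ is not adjacent to all of the current set $Q$, and let $c$ be the color at the first such step. Let $x_1,\dots,x_{n_c}$ be the vertices of color $c$, in the order in which LexColor colored them, and define $G^*$ and $G^*_i$ as in the context. Let $i\in\{2,\dots,n_c\}$. If $G^*_{i-1}$ contains a bad path, then $G$ contains a near-obstruction.
   Context: Algorithm LexColor: colors are the integers $1,\dots,n$. Each vertex $x$ has a label $label_x$, a function from colors to integers, initially identically $0$. Labels are compared by the reverse lexicographic order: $label_x <_{Lex} label_y$ iff there is a color $c$ with $label_x(c)<label_y(c)$ and $label_x(c')=label_y(c')$ for all $c'>c$. For $i=1,\dots,n$: choose an uncolored vertex $x$ whose label is maximum for $<_{Lex}$; give $x$ the smallest color $c$ not present on its already-colored neighbors; then for every uncolored neighbor $y$ of $x$ with $label_y(c)=0$, set $label_y(c):=n-i$. Algorithm Clique: with colors $1,\dots,\ell$, start with $Q:=\emptyset$; for $c=\ell,\dots,1$ select a vertex $x$ of color $c$ maximizing $|N(x)\cap Q|$ and add it to $Q$. $G^*$ is the subgraph of $G$ obtained by deleting all vertices of color $<c$. $G^*_i$ is obtained from $G^*$ by deleting $x_1,\dots,x_i$ and adding a new vertex $w_i$ adjacent to every remaining vertex of $G^*$ that is adjacent (in $G$) to at least one of $x_1,\dots,x_i$. A path $v_0$-$v_1$-$\cdots$-$v_p$ consists of distinct vertices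 with $v_jv_{j+1}$ edges; its length is $p$ and it is odd if $p$ is odd; a chord is an edge between two non-consecutive vertices of the path. For $i>1$, a bad path is an odd path $P=w_{i-1}$-$v_1$-$\cdots$-$v_p$ in $G^*_{i-1}$ with $v_p=x_i$, such that $P$ has at most one chord, and such a chord (if any) is $v_{t-1}v_{t+1}$ for some $1<t<p-1$. A near-obstruction in $G$ is a pair $(P,z)$ where $P=v_0$-$\cdots$-$v_p$ is a path in $G$ with $p\ge 3$ odd, $P$ has at most one chord and such a chord (if any) is $v_{t-1}v_{t+1}$ with $0<t<p-1$, $z$ is a vertex of $G$ not on $P$ adjacent to both $v_0$ and $v_p$, and one of the following holds: (Type 1) $v_0v_2$ is the only chord of $P$ and $z$ is adjacent to neither $v_1$ nor $v_2$; (Type 2) $v_1v_3$ is the only chord of $P$ and $z$ is non-adjacent to at least one of $v_1,v_3$; (Type 3) $v_0v_2$ is not a chord of $P$ and $z$ is not adjacent to $v_1$; (Type 4) neither $v_0v_2$ nor $v_1v_3$ is a chord of $P$, and $z$ is adjacent to $v_1$ and not to $v_2$. *)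

theory Defs
  imports Main
begin

definition graph :: "'a set \<Rightarrow> ('a \<Rightarrow> 'a \<Rightarrow> bool) \<Rightarrow> bool" where
  "graph V E \<longleftrightarrow> finite V \<and> (\<forall>u v. E u v \<longrightarrow> E v u) \<and> (\<forall>u. \<not> E u u)
     \<and> (\<forall>u v. E u v \<longrightarrow> u \<in> V \<and> v \<in> V)"

text \<open>The run is recorded by the coloring order sigma (sigma!k is the vertex
  chosen at step k+1) and the resulting coloring col. Label of y before step k+1 (i.e. after
  the vertices sigma!0..sigma!(k-1) are colored): label(c) = n - (j+1) where j is the first
  position < k whose vertex is adjacent to y and has color c; 0 if there is none.\<close>
definition lex_label :: "('a \<Rightarrow> 'a \<Rightarrow> bool) \<Rightarrow> 'a list \<Rightarrow> ('a \<Rightarrow> nat) \<Rightarrow> nat \<Rightarrow> 'a \<Rightarrow> nat \<Rightarrow> nat" where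
  "lex_label E \<sigma> col k y c =
     (if \<exists>j<k. E (\<sigma>!j) y \<and> col (\<sigma>!j) = c
      then length \<sigma> - Suc (LEAST j. j < k \<and> E (\<sigma>!j) y \<and> col (\<sigma>!j) = c)
      else 0)"

definition rlex_less :: "nat \<Rightarrow> (nat \<Rightarrow> nat) \<Rightarrow> (nat \<Rightarrow> nat) \<Rightarrow> bool" where
  "rlex_less n L1 L2 \<longleftrightarrow>
     (\<exists>c\<in>{1..n}. L1 c < L2 c \<and> (\<forall>c'. c < c' \<and> c' \<le> n \<longrightarrow> L1 c' = L2 c'))"

definition lexcolor_run :: "'a set \<Rightarrow> ('a \<Rightarrow> 'a \<Rightarrow> bool) \<Rightarrow> 'a list \<Rightarrow> ('a \<Rightarrow> nat) \<Rightarrow> bool" where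
  "lexcolor_run V E \<sigma> col \<longleftrightarrow> distinct \<sigma> \<and> set \<sigma> = V \<and>
     (\<forall>k < length \<sigma>.
        col (\<sigma>!k) = (LEAST c. 0 < c \<and> (\<forall>j<k. E (\<sigma>!j) (\<sigma>!k) \<longrightarrow> col (\<sigma>!j) \<noteq> c)) \<and>
        (\<forall>y \<in> set (drop k \<sigma>).
           \<not> rlex_less (length \<sigma>) (lex_label E \<sigma> col k (\<sigma>!k)) (lex_label E \<sigma> col k y)))"

text \<open>Clique, with colors 1..l: q c is the vertex selected for color c; the current set Q
  when color c is processed is q ` {c+1..l}.\<close>
definition clique_run :: "'a set \<Rightarrow> ('a \<Rightarrow> 'a \<Rightarrow> bool) \<Rightarrow> ('a \<Rightarrow> nat) \<Rightarrow> nat \<Rightarrow> (nat \<Rightarrow> 'a) \<Rightarrow> bool" where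
  "clique_run V E col l q \<longleftrightarrow>
     (\<forall>c\<in>{1..l}. q c \<in> V \<and> col (q c) = c \<and>
        (\<forall>y\<in>V. col y = c \<longrightarrow>
           card {u \<in> q ` {c+1..l}. E y u} \<le> card {u \<in> q ` {c+1..l}. E (q c) u}))"

definition clique_first_fail :: "('a \<Rightarrow> 'a \<Rightarrow> bool) \<Rightarrow> nat \<Rightarrow> (nat \<Rightarrow> 'a) \<Rightarrow> nat \<Rightarrow> bool" where
  "clique_first_fail E l q c \<longleftrightarrow> 1 \<le> c \<and> c \<le> l \<and>
     \<not> (\<forall>u \<in> q ` {c+1..l}. E (q c) u) \<and>
     (\<forall>c'. c < c' \<and> c' \<le> l \<longrightarrow> (\<forall>u \<in> q ` {c'+1..l}. E (q c') u))"

text \<open>G*_i, with vertices of type 'a option: Some v for an old vertex, None for w_i.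
  xs is the list x_1,...,x_{n_c} (0-indexed), so x_1..x_i = take i xs.\<close>
definition gstar_rem :: "'a set \<Rightarrow> ('a \<Rightarrow> nat) \<Rightarrow> nat \<Rightarrow> 'a list \<Rightarrow> nat \<Rightarrow> 'a set" where
  "gstar_rem V col c xs i = {v \<in> V. c \<le> col v} - set (take i xs)"

definition gstar_V :: "'a set \<Rightarrow> ('a \<Rightarrow> nat) \<Rightarrow> nat \<Rightarrow> 'a list \<Rightarrow> nat \<Rightarrow> 'a option set" where
  "gstar_V V col c xs i = insert None (Some ` gstar_rem V col c xs i)"

definition gstar_w_adj :: "'a set \<Rightarrow> ('a \<Rightarrow> 'a \<Rightarrow> bool) \<Rightarrow> ('a \<Rightarrow> nat) \<Rightarrow> nat \<Rightarrow> 'a list \<Rightarrow> nat \<Rightarrow> 'a \<Rightarrow> bool" where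
  "gstar_w_adj V E col c xs i v \<longleftrightarrow> v \<in> gstar_rem V col c xs i \<and> (\<exists>x \<in> set (take i xs). E x v)"

definition gstar_E :: "'a set \<Rightarrow> ('a \<Rightarrow> 'a \<Rightarrow> bool) \<Rightarrow> ('a \<Rightarrow> nat) \<Rightarrow> nat \<Rightarrow> 'a list \<Rightarrow> nat
     \<Rightarrow> 'a option \<Rightarrow> 'a option \<Rightarrow> bool" where
  "gstar_E V E col c xs i a b =
     (case (a, b) of
        (Some u, Some v) \<Rightarrow> u \<in> gstar_rem V col c xs i \<and> v \<in> gstar_rem V col c xs i \<and> E u v
      | (None, Some v) \<Rightarrow> gstar_w_adj V E col c xs i v
      | (Some u, None) \<Rightarrow> gstar_w_adj V E col c xs i u
      | (None, None) \<Rightarrow> False)"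

text \<open>A path v_0-...-v_p is a list of p+1 distinct vertices, consecutive ones adjacent.\<close>
definition path_in :: "'b set \<Rightarrow> ('b \<Rightarrow> 'b \<Rightarrow> bool) \<Rightarrow> 'b list \<Rightarrow> bool" where
  "path_in VS ES ps \<longleftrightarrow> ps \<noteq> [] \<and> distinct ps \<and> set ps \<subseteq> VS \<and>
     (\<forall>j. Suc j < length ps \<longrightarrow> ES (ps!j) (ps!Suc j))"

definition chords :: "('b \<Rightarrow> 'b \<Rightarrow> bool) \<Rightarrow> 'b list \<Rightarrow> (nat \<times> nat) set" where
  "chords ES ps = {(j, k). j + 2 \<le> k \<and> k < length ps \<and> ES (ps!j) (ps!k)}"

definition chord_ok :: "('b \<Rightarrow> 'b \<Rightarrow> bool) \<Rightarrow> 'b list \<Rightarrow> nat \<Rightarrow> bool" where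
  "chord_ok ES ps lo \<longleftrightarrow> chords ES ps = {} \<or>
     (\<exists>t. lo < t \<and> t + 2 < length ps \<and> chords ES ps = {(t - 1, t + 1)})"

text \<open>Bad path in G*_{i-1} (for i > 1), ending in x_i = xs!(i-1).\<close>
definition bad_path :: "'a set \<Rightarrow> ('a \<Rightarrow> 'a \<Rightarrow> bool) \<Rightarrow> ('a \<Rightarrow> nat) \<Rightarrow> nat \<Rightarrow> 'a list \<Rightarrow> nat
     \<Rightarrow> 'a option list \<Rightarrow> bool" where
  "bad_path V E col c xs i ps \<longleftrightarrow>
     path_in (gstar_V V col c xs (i - 1)) (gstar_E V E col c xs (i - 1)) ps \<and>
     odd (length ps - 1) \<and> ps!0 = None \<and> last ps = Some (xs!(i - 1)) \<and>
     chord_ok (gstar_E V E col c xs (i - 1)) ps 1"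

definition near_obstruction :: "'a set \<Rightarrow> ('a \<Rightarrow> 'a \<Rightarrow> bool) \<Rightarrow> 'a list \<Rightarrow> 'a \<Rightarrow> bool" where
  "near_obstruction V E ps z \<longleftrightarrow>
     path_in V E ps \<and> 4 \<le> length ps \<and> odd (length ps - 1) \<and> chord_ok E ps 0 \<and>
     z \<in> V \<and> z \<notin> set ps \<and> E z (ps!0) \<and> E z (last ps) \<and>
     ((chords E ps = {(0, 2)} \<and> \<not> E z (ps!1) \<and> \<not> E z (ps!2))
    \<or> (chords E ps = {(1, 3)} \<and> (\<not> E z (ps!1) \<or> \<not> E z (ps!3)))
    \<or> ((0, 2) \<notin> chords E ps \<and> \<not> E z (ps!1))
    \<or> ((0, 2) \<notin> chords E ps \<and> (1, 3) \<notin> chords E ps \<and> E z (ps!1) \<and> \<not> E z (ps!2)))"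

end

(*
  Write the bad path as w, v_0, ..., v_L, so v_L = x_i. LexColor preferred x_i to
  v_0 (and, when v_0 was coloured before x_i, to v_1 or v_2, which are coloured after x_i);
  comparing the labels at that moment produces a vertex z of colour larger than c that is
  adjacent to x_i and to some x_j with j < i, but misses v_0, v_1 or v_2 respectively.
  If some x_j sees both v_0 and z, the path x_j, v_0, ..., v_L together with z is a
  near-obstruction. Otherwise walk along the path and look at the neighbours of z: between two
  consecutive ones at odd distance there is a near-obstruction, and if there is none, some odd
  path from v_0 to z through the v_a has at most one admissible chord. Closing that path with
  the new vertex w and the first colour-c vertex seeing its far end gives a bad path in an
  earlier graph G*_(k-1), k < i, and the induction hypothesis applies.
*)
theory Submission
  imports Defs
begin

lemma graph_sym: "graph V E \<Longrightarrow> E u w \<Longrightarrow> E w u"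
  unfolding graph_def by blast

lemma graph_irrefl: "graph V E \<Longrightarrow> \<not> E u u"
  unfolding graph_def by blast

lemma graph_edge_in_V: "graph V E \<Longrightarrow> E u w \<Longrightarrow> u \<in> V \<and> w \<in> V"
  unfolding graph_def by blast

section \<open>LexColor\<close>

locale lexcolor =
  fixes V :: "'a set" and E :: "'a \<Rightarrow> 'a \<Rightarrow> bool" and \<sigma> :: "'a list" and col :: "'a \<Rightarrow> nat"
  assumes graph: "graph V E" and run: "lexcolor_run V E \<sigma> col"
begin

abbreviation "n \<equiv> length \<sigma>"

lemma distinct_order: "distinct \<sigma>" and set_order: "set \<sigma> = V"
  using run unfolding lexcolor_run_def by auto

lemmas sym = graph_sym[OF graph] and irrefl = graph_irrefl[OF graph]
  and edge_in_V = graph_edge_in_V[OF graph]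

lemma col_nth: "k < n \<Longrightarrow> col (\<sigma>!k) = (LEAST c. 0 < c \<and> (\<forall>j<k. E (\<sigma>!j) (\<sigma>!k) \<longrightarrow> col (\<sigma>!j) \<noteq> c))"
  using run unfolding lexcolor_run_def by blast

lemma label_not_less: "k < n \<Longrightarrow> y \<in> set (drop k \<sigma>) \<Longrightarrow>
   \<not> rlex_less n (lex_label E \<sigma> col k (\<sigma>!k)) (lex_label E \<sigma> col k y)"
  using run unfolding lexcolor_run_def by blast

lemma ex_free_color: "\<exists>c. 0 < c \<and> (\<forall>j<k. E (\<sigma>!j) (\<sigma>!k) \<longrightarrow> col (\<sigma>!j) \<noteq> c)"
proof -
  let ?M = "Suc (Max (insert 0 ((\<lambda>j. col (\<sigma>!j)) ` {..<k})))"
  have "\<forall>j<k. col (\<sigma>!j) < ?M"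
    by (simp add: le_imp_less_Suc)
  then show ?thesis by (metis less_not_refl zero_less_Suc)
qed

lemma col_nth_free:
  assumes "k < n"
  shows "0 < col (\<sigma>!k)" and "j < k \<Longrightarrow> E (\<sigma>!j) (\<sigma>!k) \<Longrightarrow> col (\<sigma>!j) \<noteq> col (\<sigma>!k)"
proof -
  have "0 < col (\<sigma>!k) \<and> (\<forall>j<k. E (\<sigma>!j) (\<sigma>!k) \<longrightarrow> col (\<sigma>!j) \<noteq> col (\<sigma>!k))"
    unfolding col_nth[OF assms] by (rule LeastI_ex[OF ex_free_color])
  then show "0 < col (\<sigma>!k)" and "j < k \<Longrightarrow> E (\<sigma>!j) (\<sigma>!k) \<Longrightarrow> col (\<sigma>!j) \<noteq> col (\<sigma>!k)"
    by auto
qed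

lemma smaller_color_on_earlier_neighbour:
  assumes "k < n" "0 < c'" "c' < col (\<sigma>!k)"
  shows "\<exists>j<k. E (\<sigma>!j) (\<sigma>!k) \<and> col (\<sigma>!j) = c'"
proof -
  have "c' < (LEAST c. 0 < c \<and> (\<forall>j<k. E (\<sigma>!j) (\<sigma>!k) \<longrightarrow> col (\<sigma>!j) \<noteq> c))"
    using col_nth[OF assms(1)] assms(3) by simp
  then have "\<not> (0 < c' \<and> (\<forall>j<k. E (\<sigma>!j) (\<sigma>!k) \<longrightarrow> col (\<sigma>!j) \<noteq> c'))"
    by (rule not_less_Least)
  then show ?thesis using assms(2) by blast
qed

lemma col_nth_le: assumes "k < n" shows "col (\<sigma>!k) \<le> Suc k"
proof (rule ccontr)
  assume "\<not> ?thesis"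
  have "{1..Suc k} \<subseteq> (\<lambda>j. col (\<sigma>!j)) ` {..<k}"
  proof
    fix x assume "x \<in> {1..Suc k}"
    then have "0 < x" "x < col (\<sigma>!k)" using \<open>\<not> col (\<sigma>!k) \<le> Suc k\<close> by auto
    then obtain j where "j < k" "col (\<sigma>!j) = x"
      using smaller_color_on_earlier_neighbour[OF assms] by blast
    then show "x \<in> (\<lambda>j. col (\<sigma>!j)) ` {..<k}" by force
  qed
  then have "card {1..Suc k} \<le> card ((\<lambda>j. col (\<sigma>!j)) ` {..<k})" by (intro card_mono) auto
  also have "\<dots> \<le> k" using card_image_le[of "{..<k}"] by simp
  finally show False by simp
qed

lemma position: "u \<in> V \<Longrightarrow> \<exists>k<n. \<sigma>!k = u"
  using set_order by (metis in_set_conv_nth)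

lemma col_proper: assumes "E u w" shows "col u \<noteq> col w"
proof -
  obtain a b where a: "a < n" "\<sigma>!a = u" and b: "b < n" "\<sigma>!b = w"
    using edge_in_V[OF assms] position by blast
  have "a \<noteq> b" using a b assms irrefl by blast
  then consider "a < b" | "b < a" by linarith
  then show ?thesis
  proof cases
    case 1 then show ?thesis using col_nth_free(2)[OF b(1)] a b assms by blast
  next
    case 2 then show ?thesis using col_nth_free(2)[OF a(1), of b] a b sym[OF assms] by auto
  qed
qed

lemma col_pos: assumes "u \<in> V" shows "0 < col u"
proof -
  obtain k where "k < n" "\<sigma>!k = u" using position assms by blast
  then show ?thesis using col_nth_free(1) by blast
qed

lemma lex_label_first_neighbour:
  assumes "\<exists>j<k. E (\<sigma>!j) y \<and> col (\<sigma>!j) = d"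
  obtains j where "j < k" "E (\<sigma>!j) y" "col (\<sigma>!j) = d" "lex_label E \<sigma> col k y d = n - Suc j"
    "\<And>j'. j' < j \<Longrightarrow> \<not> (E (\<sigma>!j') y \<and> col (\<sigma>!j') = d)"
proof -
  define P where "P = (\<lambda>j. j < k \<and> E (\<sigma>!j) y \<and> col (\<sigma>!j) = d)"
  define j where "j = (LEAST j. P j)"
  have "P j" unfolding j_def P_def by (rule LeastI_ex) (use assms in blast)
  moreover have "\<And>j'. j' < j \<Longrightarrow> \<not> P j'" unfolding j_def by (rule not_less_Least)
  moreover have "lex_label E \<sigma> col k y d = n - Suc j"
    unfolding lex_label_def j_def P_def using assms by (simp only: if_True)
  ultimately show ?thesis unfolding P_def by (intro that[of j]) auto
qed

lemma lex_label_pos_iff: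
  assumes "k < n"
  shows "0 < lex_label E \<sigma> col k y d \<longleftrightarrow> (\<exists>j<k. E (\<sigma>!j) y \<and> col (\<sigma>!j) = d)"
proof (cases "\<exists>j<k. E (\<sigma>!j) y \<and> col (\<sigma>!j) = d")
  case True
  then obtain j where "j < k" "lex_label E \<sigma> col k y d = n - Suc j"
    using lex_label_first_neighbour[OF True] by blast
  then show ?thesis using True assms by simp
next
  case False then show ?thesis unfolding lex_label_def by (simp only: if_False) simp
qed

lemma highest_label_difference:
  assumes s: "s < q" "q < n" and c: "1 \<le> c"
    and d0: "c \<le> d0" "d0 \<le> n" "lex_label E \<sigma> col s (\<sigma>!s) d0 \<noteq> lex_label E \<sigma> col s (\<sigma>!q) d0"
  shows "\<exists>d\<ge>c. lex_label E \<sigma> col s (\<sigma>!q) d < lex_label E \<sigma> col s (\<sigma>!s) d"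
proof -
  define Lx where "Lx = lex_label E \<sigma> col s (\<sigma>!s)"
  define Ly where "Ly = lex_label E \<sigma> col s (\<sigma>!q)"
  define D where "D = {d. c \<le> d \<and> d \<le> n \<and> Lx d \<noteq> Ly d}"
  have fin: "finite D" unfolding D_def by simp
  have "d0 \<in> D" using d0 unfolding D_def Lx_def Ly_def by simp
  define d where "d = Max D"
  have dD: "d \<in> D" unfolding d_def using fin \<open>d0 \<in> D\<close> Max_in by blast
  have above: "Lx d' = Ly d'" if "d < d'" "d' \<le> n" for d'
  proof (rule ccontr)
    assume "Lx d' \<noteq> Ly d'"
    then have "d' \<in> D" using that dD unfolding D_def by auto
    then have "d' \<le> d" unfolding d_def using fin by simp
    then show False using that by simp
  qed
  have "\<sigma>!q \<in> set (drop s \<sigma>)"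
    using s by (metis Cons_nth_drop_Suc drop_drop in_set_dropD le_add_diff_inverse2 less_imp_le_nat
        list.set_intros(1) order.strict_trans)
  then have "\<not> rlex_less n Lx Ly" using label_not_less s unfolding Lx_def Ly_def by simp
  moreover have "rlex_less n Lx Ly" if "Lx d < Ly d"
    unfolding rlex_less_def using that dD c above unfolding D_def by auto
  ultimately have "\<not> Lx d < Ly d" by blast
  then have "Ly d < Lx d" using dD unfolding D_def by simp
  then show ?thesis using dD unfolding D_def Lx_def Ly_def by blast
qed

lemma label_difference_witness:
  assumes s: "s < n" and no_c: "\<forall>j<s. E (\<sigma>!j) (\<sigma>!s) \<longrightarrow> col (\<sigma>!j) \<noteq> c"
    and d: "c \<le> d" "lex_label E \<sigma> col s y d < lex_label E \<sigma> col s (\<sigma>!s) d"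
  shows "\<exists>j<s. E (\<sigma>!j) (\<sigma>!s) \<and> c < col (\<sigma>!j) \<and> \<not> E (\<sigma>!j) y"
proof -
  have "0 < lex_label E \<sigma> col s (\<sigma>!s) d" using d by simp
  then have "\<exists>j<s. E (\<sigma>!j) (\<sigma>!s) \<and> col (\<sigma>!j) = d" using lex_label_pos_iff[OF s] by blast
  then obtain j where j: "j < s" "E (\<sigma>!j) (\<sigma>!s)" "col (\<sigma>!j) = d"
      "lex_label E \<sigma> col s (\<sigma>!s) d = n - Suc j"
    using lex_label_first_neighbour by blast
  have "c < col (\<sigma>!j)" using no_c j d by fastforce
  moreover have "\<not> E (\<sigma>!j) y"
  proof
    assume "E (\<sigma>!j) y"
    then have "\<exists>j<s. E (\<sigma>!j) y \<and> col (\<sigma>!j) = d" using j by blast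
    then obtain j' where j': "lex_label E \<sigma> col s y d = n - Suc j'"
        "\<And>j''. j'' < j' \<Longrightarrow> \<not> (E (\<sigma>!j'') y \<and> col (\<sigma>!j'') = d)"
      using lex_label_first_neighbour by blast
    have "\<not> j < j'" using j'(2)[of j] \<open>E (\<sigma>!j) y\<close> j(3) by blast
    then show False using d j(4) j'(1) by simp
  qed
  ultimately show ?thesis using j by blast
qed

(* The two consequences of the maximum-label rule used below: when \<sigma>!s was chosen although
   \<sigma>!q was available, some earlier neighbour of \<sigma>!s of larger colour misses \<sigma>!q. *)

lemma lex_neighbour_missing_color:
  assumes sq: "s < q" "q < n"
    and no_c: "\<forall>j<s. E (\<sigma>!j) (\<sigma>!s) \<longrightarrow> col (\<sigma>!j) \<noteq> c"
    and q_c: "\<exists>j<s. E (\<sigma>!j) (\<sigma>!q) \<and> col (\<sigma>!j) = c"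
  shows "\<exists>j<s. E (\<sigma>!j) (\<sigma>!s) \<and> c < col (\<sigma>!j) \<and> \<not> E (\<sigma>!j) (\<sigma>!q)"
proof -
  have s: "s < n" using sq by simp
  obtain j where "j < s" "col (\<sigma>!j) = c" using q_c by blast
  then have c: "1 \<le> c" "c \<le> n"
    using col_nth_free(1)[of j] col_nth_le[of j] s by auto
  have "lex_label E \<sigma> col s (\<sigma>!s) c = 0" using lex_label_pos_iff[OF s, of "\<sigma>!s" c] no_c by auto
  moreover have "0 < lex_label E \<sigma> col s (\<sigma>!q) c" using lex_label_pos_iff[OF s] q_c by blast
  ultimately obtain d where "c \<le> d" "lex_label E \<sigma> col s (\<sigma>!q) d < lex_label E \<sigma> col s (\<sigma>!s) d"
    using highest_label_difference[OF sq c(1) order.refl c(2)] by auto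
  then show ?thesis using label_difference_witness[OF s no_c] by blast
qed

lemma lex_neighbour_missing_vertex:
  assumes sq: "s < q" "q < n" and c: "1 \<le> c"
    and no_c: "\<forall>j<s. E (\<sigma>!j) (\<sigma>!s) \<longrightarrow> col (\<sigma>!j) \<noteq> c"
    and u: "u < s" "E (\<sigma>!u) (\<sigma>!q)" "c < col (\<sigma>!u)" "\<not> E (\<sigma>!u) (\<sigma>!s)"
  shows "\<exists>j<s. E (\<sigma>!j) (\<sigma>!s) \<and> c < col (\<sigma>!j) \<and> (\<not> E (\<sigma>!j) (\<sigma>!q) \<or> \<not> E (\<sigma>!j) (\<sigma>!u))"
proof (cases "\<exists>d0. c \<le> d0 \<and> d0 \<le> n \<and> lex_label E \<sigma> col s (\<sigma>!s) d0 \<noteq> lex_label E \<sigma> col s (\<sigma>!q) d0")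
  case True
  then obtain d where "c \<le> d" "lex_label E \<sigma> col s (\<sigma>!q) d < lex_label E \<sigma> col s (\<sigma>!s) d"
    using highest_label_difference[OF sq c] by blast
  then show ?thesis using label_difference_witness[OF _ no_c] sq by fastforce
next
  case False
  have s: "s < n" using sq by simp
  let ?d = "col (\<sigma>!u)"
  have "?d \<le> n" using col_nth_le[of u] u s by simp
  then have same: "lex_label E \<sigma> col s (\<sigma>!s) ?d = lex_label E \<sigma> col s (\<sigma>!q) ?d"
    using False u by auto
  have "\<exists>j<s. E (\<sigma>!j) (\<sigma>!q) \<and> col (\<sigma>!j) = ?d" using u by blast
  then obtain j' where j': "lex_label E \<sigma> col s (\<sigma>!q) ?d = n - Suc j'" "j' < s"
      "\<And>j''. j'' < j' \<Longrightarrow> \<not> (E (\<sigma>!j'') (\<sigma>!q) \<and> col (\<sigma>!j'') = ?d)"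
    using lex_label_first_neighbour by blast
  then have "0 < lex_label E \<sigma> col s (\<sigma>!s) ?d" using same s by simp
  then have "\<exists>j<s. E (\<sigma>!j) (\<sigma>!s) \<and> col (\<sigma>!j) = ?d" using lex_label_pos_iff[OF s] by blast
  then obtain j where j: "j < s" "E (\<sigma>!j) (\<sigma>!s)" "col (\<sigma>!j) = ?d"
      "lex_label E \<sigma> col s (\<sigma>!s) ?d = n - Suc j"
    using lex_label_first_neighbour by blast
  have "j = j'" using j j' same s by simp
  moreover have "\<not> u < j'" using j'(3)[of u] u by blast
  moreover have "j \<noteq> u" using j u by auto
  ultimately have "j < u" by simp
  then have "\<not> E (\<sigma>!j) (\<sigma>!u)" using col_proper j(3) by blast
  then show ?thesis using j u by auto
qed

end

section \<open>Paths and chords\<close>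

lemma chords_map: "chords ES (map f [0..<N]) = {(j,k). j + 2 \<le> k \<and> k < N \<and> ES (f j) (f k)}"
  unfolding chords_def by auto

lemma chords_rev:
  assumes sym: "\<And>a b. ES a b \<Longrightarrow> ES b a"
  shows "chords ES (rev C) = (\<lambda>(j,k). (length C - 1 - k, length C - 1 - j)) ` chords ES C"
proof (rule set_eqI, rule iffI)
  let ?l = "length C"
  fix p assume "p \<in> chords ES (rev C)"
  then obtain j k where p: "p = (j,k)" "j + 2 \<le> k" "k < ?l" "ES (C ! (?l - 1 - j)) (C ! (?l - 1 - k))"
    unfolding chords_def by (auto simp: rev_nth)
  then have "(?l - 1 - k, ?l - 1 - j) \<in> chords ES C" unfolding chords_def using sym by auto
  moreover have "p = (\<lambda>(j,k). (?l - 1 - k, ?l - 1 - j)) (?l - 1 - k, ?l - 1 - j)" using p by auto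
  ultimately show "p \<in> (\<lambda>(j,k). (?l - 1 - k, ?l - 1 - j)) ` chords ES C" by blast
next
  let ?l = "length C"
  fix p assume "p \<in> (\<lambda>(j,k). (?l - 1 - k, ?l - 1 - j)) ` chords ES C"
  then obtain j k where "j + 2 \<le> k" "k < ?l" "ES (C ! k) (C ! j)" and p: "p = (?l - 1 - k, ?l - 1 - j)"
    unfolding chords_def using sym by auto
  then show "p \<in> chords ES (rev C)" unfolding chords_def by (auto simp: rev_nth)
qed

definition at_most_short_chord :: "('b \<Rightarrow> 'b \<Rightarrow> bool) \<Rightarrow> 'b list \<Rightarrow> bool" where
  "at_most_short_chord ES C \<longleftrightarrow>
     chords ES C = {} \<or> (\<exists>t. 0 < t \<and> t + 2 \<le> length C \<and> chords ES C = {(t - 1, t + 1)})"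

lemma at_most_short_chord_rev:
  assumes sym: "\<And>a b. ES a b \<Longrightarrow> ES b a" and C: "at_most_short_chord ES C"
  shows "at_most_short_chord ES (rev C)"
proof -
  from C consider "chords ES C = {}"
    | t where "0 < t" "t + 2 \<le> length C" "chords ES C = {(t - 1, t + 1)}"
    unfolding at_most_short_chord_def by blast
  then show ?thesis
  proof cases
    case 1 then show ?thesis using chords_rev[OF sym, where C = C] unfolding at_most_short_chord_def by simp
  next
    case (2 t)
    then have "chords ES (rev C) = {(length C - 1 - (t + 1), length C - 1 - (t - 1))}"
      using chords_rev[OF sym, where C = C] by simp
    also have "\<dots> = {((length C - 1 - t) - 1, (length C - 1 - t) + 1)}" using 2 by auto
    finally show ?thesis unfolding at_most_short_chord_def using 2
      by (intro disjI2 exI[of _ "length C - 1 - t"]) auto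
  qed
qed

lemma path_in_rev:
  assumes sym: "\<And>a b. ES a b \<Longrightarrow> ES b a" and C: "path_in VS ES C"
  shows "path_in VS ES (rev C)"
  unfolding path_in_def
proof (intro conjI allI impI)
  fix j assume j: "Suc j < length (rev C)"
  let ?l = "length C"
  have "ES (C ! (?l - Suc (Suc j))) (C ! Suc (?l - Suc (Suc j)))"
    using C j unfolding path_in_def by simp
  moreover have "Suc (?l - Suc (Suc j)) = ?l - Suc j" using j by simp
  ultimately show "ES (rev C ! j) (rev C ! Suc j)" using j sym by (simp add: rev_nth)
qed (use C in \<open>auto simp: path_in_def\<close>)

lemma near_obstructionI:
  assumes N: "4 \<le> N" "even N" and f: "inj_on f {..<N}" "\<And>j. j < N \<Longrightarrow> f j \<in> V"
    and consecutive: "\<And>j. Suc j < N \<Longrightarrow> E (f j) (f (Suc j))"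
    and z: "z \<in> V" "\<And>j. j < N \<Longrightarrow> z \<noteq> f j" "E z (f 0)" "E z (f (N - 1))"
    and CS: "{(j,k). j + 2 \<le> k \<and> k < N \<and> E (f j) (f k)} = CS"
    and short: "CS = {} \<or> (\<exists>t. 0 < t \<and> t + 2 < N \<and> CS = {(t - 1, t + 1)})"
    and type: "(CS = {(0,2)} \<and> \<not> E z (f 1) \<and> \<not> E z (f 2)) \<or> (CS = {(1,3)} \<and> (\<not> E z (f 1) \<or> \<not> E z (f 3)))
       \<or> ((0,2) \<notin> CS \<and> \<not> E z (f 1)) \<or> ((0,2) \<notin> CS \<and> (1,3) \<notin> CS \<and> E z (f 1) \<and> \<not> E z (f 2))"
  shows "near_obstruction V E (map f [0..<N]) z"
proof -
  define ps where "ps = map f [0..<N]"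
  have len: "length ps = N" and nth: "\<And>j. j < N \<Longrightarrow> ps ! j = f j" unfolding ps_def by simp_all
  have "distinct ps" unfolding ps_def distinct_map using f(1) by (simp add: atLeast0LessThan)
  moreover have "set ps = f ` {..<N}" unfolding ps_def by auto
  ultimately have "path_in V E ps" "z \<notin> set ps"
    unfolding path_in_def using N f(2) consecutive z(2) len nth by auto
  moreover have "ps \<noteq> []" using N len by auto
  then have "last ps = f (N - 1)" using N nth len by (simp add: last_conv_nth)
  moreover have "ps ! 0 = f 0" "ps ! 1 = f 1" "ps ! 2 = f 2" "ps ! 3 = f 3" using nth N by auto
  moreover have "chords E ps = CS" unfolding ps_def chords_map CS ..
  ultimately show ?thesis
    unfolding ps_def[symmetric] near_obstruction_def chord_ok_def
    using N len short z(1,3,4) type by auto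
qed

section \<open>A path with one short chord and a hub vertex\<close>

definition chord_path_adj :: "bool \<Rightarrow> nat \<Rightarrow> nat \<Rightarrow> nat \<Rightarrow> bool" where
  "chord_path_adj has_chord chord_mid a b \<longleftrightarrow> a = Suc b \<or> b = Suc a \<or>
     (has_chord \<and> ((Suc a = chord_mid \<and> b = Suc chord_mid) \<or> (Suc b = chord_mid \<and> a = Suc chord_mid)))"

locale chorded_path_hub =
  fixes V :: "'a set" and E :: "'a \<Rightarrow> 'a \<Rightarrow> bool" and v :: "nat \<Rightarrow> 'a" and L :: nat
    and has_chord :: bool and chord_mid :: nat and z :: 'a
  assumes sym: "\<And>a b. E a b \<Longrightarrow> E b a"
    and L_even: "even L" and L_ge: "2 \<le> L"
    and v_inj: "inj_on v {..L}"
    and v_in_V: "\<And>a. a \<le> L \<Longrightarrow> v a \<in> V"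
    and z_in_V: "z \<in> V"
    and z_off_path: "\<And>a. a \<le> L \<Longrightarrow> z \<noteq> v a"
    and chord_mid_bounds: "has_chord \<Longrightarrow> 1 \<le> chord_mid \<and> chord_mid + 2 \<le> L"
    and v_adj: "\<And>a b. a \<le> L \<Longrightarrow> b \<le> L \<Longrightarrow>
      E (v a) (v b) \<longleftrightarrow> chord_path_adj has_chord chord_mid a b"
    and z_adj_last: "E z (v L)"
begin

abbreviation adj_idx :: "nat \<Rightarrow> nat \<Rightarrow> bool" where
  "adj_idx \<equiv> chord_path_adj has_chord chord_mid"

definition z_adj :: "nat \<Rightarrow> bool" where
  "z_adj a \<longleftrightarrow> E z (v a)"

(* A core is what becomes of the inner part of a new, shorter bad path (see shorter_bad_path). *)
definition core_path :: "'a list \<Rightarrow> bool" where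
  "core_path C \<longleftrightarrow> path_in (v ` {..L} \<union> {z}) E C \<and> C!0 = v 0 \<and> last C = z \<and>
     even (length C) \<and> at_most_short_chord E C"

(* In the case analysis below a path is given by the indices g 0, g 1, ... of its vertices;
   near_build closes it with z into a near-obstruction, core_build appends z to get a core. *)
lemma near_build:
  assumes N: "4 \<le> N" "even N" and g: "inj_on g {..<N}" "\<And>j. j < N \<Longrightarrow> g j \<le> L"
    and consecutive: "\<And>j. Suc j < N \<Longrightarrow> adj_idx (g j) (g (Suc j))"
    and ends: "z_adj (g 0)" "z_adj (g (N - 1))"
    and CS: "{(j,k). j + 2 \<le> k \<and> k < N \<and> adj_idx (g j) (g k)} = CS"
    and short: "CS = {} \<or> (\<exists>t. 0 < t \<and> t + 2 < N \<and> CS = {(t - 1, t + 1)})"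
    and type: "(CS = {(0,2)} \<and> \<not> z_adj (g 1) \<and> \<not> z_adj (g 2)) \<or> (CS = {(1,3)} \<and> (\<not> z_adj (g 1) \<or> \<not> z_adj (g 3)))
      \<or> ((0,2) \<notin> CS \<and> \<not> z_adj (g 1)) \<or> ((0,2) \<notin> CS \<and> (1,3) \<notin> CS \<and> z_adj (g 1) \<and> \<not> z_adj (g 2))"
  shows "\<exists>ps z'. near_obstruction V E ps z'"
proof -
  have adj: "E (v (g j)) (v (g k)) \<longleftrightarrow> adj_idx (g j) (g k)" if "j < N" "k < N" for j k
    using v_adj g(2) that by simp
  have "inj_on (v \<circ> g) {..<N}"
    using g v_inj by (simp add: inj_on_def)
  moreover have "{(j,k). j + 2 \<le> k \<and> k < N \<and> E ((v \<circ> g) j) ((v \<circ> g) k)} = CS"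
    using CS adj by auto
  ultimately have "near_obstruction V E (map (v \<circ> g) [0..<N]) z"
    using N g(2) consecutive ends short type adj z_off_path v_in_V z_in_V unfolding z_adj_def
    by (intro near_obstructionI) auto
  then show ?thesis by blast
qed

lemma core_build:
  assumes M: "odd M" and g: "g 0 = 0" "inj_on g {..<M}" "\<And>j. j < M \<Longrightarrow> g j \<le> L"
    and consecutive: "\<And>j. Suc j < M \<Longrightarrow> adj_idx (g j) (g (Suc j))"
    and last: "z_adj (g (M - 1))"
    and CS: "{(j,k). j + 2 \<le> k \<and> k < M \<and> adj_idx (g j) (g k)} \<union> {(j,M) |j. j + 2 \<le> M \<and> z_adj (g j)} = CS"
    and short: "CS = {} \<or> (\<exists>t. 0 < t \<and> t + 1 \<le> M \<and> CS = {(t - 1, t + 1)})"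
  shows "\<exists>C. core_path C"
proof -
  define f where "f = (\<lambda>j. if j < M then v (g j) else z)"
  define C where "C = map f [0..<Suc M]"
  have len: "length C = Suc M" and nth: "\<And>j. j < Suc M \<Longrightarrow> C ! j = f j"
    unfolding C_def by (simp_all del: upt_Suc)
  have f_adj: "E (f j) (f k) \<longleftrightarrow> (k < M \<and> adj_idx (g j) (g k)) \<or> (k = M \<and> z_adj (g j))"
    if "j < k" "k < Suc M" for j k
    using that v_adj g(3) sym unfolding f_def z_adj_def by (cases "k < M") auto
  have "chords E C = CS"
    unfolding C_def chords_map using f_adj CS[symmetric] by fastforce
  moreover have "inj_on f {..<Suc M}"
  proof (rule inj_onI)
    fix x y assume "x \<in> {..<Suc M}" "y \<in> {..<Suc M}" "f x = f y"
    then show "x = y"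
      using v_inj g(2,3) z_off_path unfolding f_def inj_on_def
      by (auto split: if_splits) (metis atMost_iff lessThan_iff)+
  qed
  then have "distinct C" unfolding C_def distinct_map by (simp add: atLeast0LessThan del: upt_Suc)
  moreover have "set C \<subseteq> v ` {..L} \<union> {z}" using g(3) unfolding C_def f_def by auto
  moreover have "\<forall>j. Suc j < length C \<longrightarrow> E (C!j) (C!Suc j)"
  proof (intro allI impI)
    fix j assume "Suc j < length C"
    then consider "Suc j < M" | "Suc j = M" using len by linarith
    then show "E (C!j) (C!Suc j)"
      using nth len f_adj[of j "Suc j"] consecutive last by cases auto
  qed
  moreover have "C \<noteq> []" "C!0 = v 0" using nth len M g(1) unfolding f_def by (auto simp: odd_pos)
  moreover have "last C = z" using \<open>C \<noteq> []\<close> nth len unfolding f_def by (simp add: last_conv_nth)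
  ultimately have "core_path C"
    unfolding core_path_def path_in_def at_most_short_chord_def len using M short by auto
  then show ?thesis by blast
qed

lemma greatest_hub_below:
  assumes "z_adj a" "a < m"
  obtains b where "z_adj b" "b < m" "\<And>x. z_adj x \<Longrightarrow> x < m \<Longrightarrow> x \<le> b"
  using Nat.ex_has_greatest_nat[of "\<lambda>x. z_adj x \<and> x < m" a m] assms by auto

lemma core_prefix:
  assumes "a0 \<le> L" "z_adj a0" "even a0" "\<And>a. a < a0 \<Longrightarrow> \<not> z_adj a"
  shows "\<exists>C. core_path C"
  by (rule core_build[where M = "Suc a0" and g = id
        and CS = "if has_chord \<and> chord_mid < a0 then {(chord_mid - 1, chord_mid + 1)} else {}"])
    (use assms chord_mid_bounds in \<open>auto simp: chord_path_adj_def\<close>)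

lemma near_gap:
  assumes "a0 \<le> L" "z_adj a0" "even a0" "z_adj b" "odd b" "b + 3 \<le> a0"
    "\<And>a. b < a \<Longrightarrow> a < a0 \<Longrightarrow> \<not> z_adj a"
  shows "\<exists>ps z'. near_obstruction V E ps z'"
proof (cases "has_chord \<and> b < chord_mid \<and> Suc chord_mid = a0")
  case True
  show ?thesis
    by (rule near_build[where N = "Suc (a0 - b)" and g = "\<lambda>j. a0 - j" and CS = "{(0,2)}"])
      (use assms True in \<open>auto simp: chord_path_adj_def inj_on_def\<close>)
next
  case False
  show ?thesis
    by (rule near_build[where N = "Suc (a0 - b)" and g = "\<lambda>j. b + j"
          and CS = "if has_chord \<and> b < chord_mid \<and> chord_mid < a0
            then {(chord_mid - b - 1, chord_mid - b + 1)} else {}"])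
      (use assms False in \<open>auto simp: chord_path_adj_def\<close>)
qed

lemma near_tail:
  assumes "has_chord" "chord_mid = b" "odd b" "z_adj b" "z_adj (Suc b)" "\<not> z_adj (b + 2)"
  shows "\<exists>ps z'. near_obstruction V E ps z'"
proof -
  have "b + 3 \<le> L"
    using assms chord_mid_bounds z_adj_last L_even unfolding z_adj_def by (cases "b + 2 = L") auto
  show ?thesis
    by (rule near_build[where N = "Suc (L - b)" and g = "\<lambda>j. b + j" and CS = "{}"])
      (use assms \<open>b + 3 \<le> L\<close> z_adj_last L_even in \<open>auto simp: chord_path_adj_def z_adj_def\<close>)
qed

lemma core_prefix_chord_to_hub:
  assumes "z_adj b" "z_adj (Suc b)" "Suc b \<le> L" "odd b" "\<And>a. a < b \<Longrightarrow> \<not> z_adj a" "has_chord \<Longrightarrow> b < chord_mid"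
  shows "\<exists>C. core_path C"
  by (rule core_build[where M = "b + 2" and g = id and CS = "{(b, b + 2)}"])
    (use assms in \<open>auto simp: chord_path_adj_def le_less\<close>)

lemma core_prefix_shortcut:
  assumes "z_adj b" "Suc b \<le> L" "odd b" "\<And>a. a < b \<Longrightarrow> \<not> z_adj a" "has_chord" "chord_mid < b"
  shows "\<exists>C. core_path C"
  by (rule core_build[where M = b and g = "\<lambda>j. if j < chord_mid then j else Suc j" and CS = "{}"])
    (use assms chord_mid_bounds in \<open>auto simp: chord_path_adj_def inj_on_def\<close>)

lemma core_prefix_shortcut_chord_to_hub:
  assumes "z_adj (Suc b)" "z_adj (b + 2)" "b + 2 \<le> L" "odd b" "\<And>a. a < b \<Longrightarrow> \<not> z_adj a" "has_chord" "chord_mid = b"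
  shows "\<exists>C. core_path C"
  by (rule core_build[where M = "b + 2" and g = "\<lambda>j. if j < b then j else Suc j"
        and CS = "{(b, b + 2)}"])
    (use assms odd_pos in \<open>auto simp: chord_path_adj_def inj_on_def le_less split: if_splits\<close>)

lemma near_segment_reversed:
  assumes "z_adj b" "z_adj (Suc b)" "Suc b \<le> L" "z_adj c" "c + 2 \<le> b" "\<And>a. c < a \<Longrightarrow> a < b \<Longrightarrow> \<not> z_adj a"
    "odd b" "odd c" "has_chord \<Longrightarrow> chord_mid \<noteq> Suc c \<and> chord_mid \<noteq> b - 1 \<and> chord_mid \<noteq> b"
  shows "\<exists>ps z'. near_obstruction V E ps z'"
  by (rule near_build[where N = "b + 2 - c" and g = "\<lambda>j. Suc b - j"
        and CS = "if has_chord \<and> c < chord_mid \<and> chord_mid < b then {(b - chord_mid, b - chord_mid + 2)} else {}"])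
    (use assms in \<open>auto simp: chord_path_adj_def inj_on_def\<close>)

lemma near_segment_chord_at_start:
  assumes "z_adj b" "z_adj (Suc b)" "Suc b \<le> L" "z_adj c" "c + 2 \<le> b" "\<And>a. c < a \<Longrightarrow> a < b \<Longrightarrow> \<not> z_adj a"
    "odd b" "odd c" "has_chord" "chord_mid = Suc c" "chord_mid \<noteq> b - 1"
  shows "\<exists>ps z'. near_obstruction V E ps z'"
  by (rule near_build[where N = "b + 2 - c" and g = "\<lambda>j. c + j" and CS = "{(0,2)}"])
    (use assms in \<open>auto simp: chord_path_adj_def\<close>)

lemma near_segment_reversed_chord_at_end:
  assumes "z_adj b" "z_adj (Suc b)" "Suc b \<le> L" "z_adj c" "c + 2 \<le> b" "\<And>a. c < a \<Longrightarrow> a < b \<Longrightarrow> \<not> z_adj a"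
    "odd b" "odd c" "has_chord" "chord_mid = b - 1" "chord_mid \<noteq> Suc c"
  shows "\<exists>ps z'. near_obstruction V E ps z'"
  by (rule near_build[where N = "b + 2 - c" and g = "\<lambda>j. Suc b - j" and CS = "{(1,3)}"])
    (use assms in \<open>auto simp: chord_path_adj_def inj_on_def\<close>)

lemma core_prefix_skip:
  assumes "z_adj c" "z_adj (c + 2)" "z_adj (c + 3)" "c + 3 \<le> L" "odd c" "\<And>a. a < c \<Longrightarrow> \<not> z_adj a"
    "has_chord" "chord_mid = Suc c"
  shows "\<exists>C. core_path C"
  by (rule core_build[where M = "c + 2" and g = "\<lambda>j. if j \<le> c then j else Suc j"
        and CS = "{(c, c + 2)}"])
    (use assms in \<open>auto simp: chord_path_adj_def inj_on_def le_less split: if_splits\<close>)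

lemma near_skip:
  assumes "z_adj c" "z_adj (c + 2)" "c + 2 \<le> L" "z_adj e" "e + 2 \<le> c" "\<And>a. e < a \<Longrightarrow> a < c \<Longrightarrow> \<not> z_adj a"
    "odd c" "odd e" "has_chord" "chord_mid = Suc c"
  shows "\<exists>ps z'. near_obstruction V E ps z'"
  by (rule near_build[where N = "c - e + 2" and g = "\<lambda>j. if j = 0 then c + 2 else c + 1 - j"
        and CS = "{}"])
    (use assms in \<open>auto simp: chord_path_adj_def inj_on_def split: if_splits\<close>)

lemma near_skip_chord_to_hub:
  assumes "z_adj (b + 1)" "z_adj (b + 2)" "b + 2 \<le> L" "z_adj c" "c + 2 \<le> b"
    "\<And>a. c < a \<Longrightarrow> a < b \<Longrightarrow> \<not> z_adj a" "odd b" "odd c" "has_chord" "chord_mid = b"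
  shows "\<exists>ps z'. near_obstruction V E ps z'"
  by (rule near_build[where N = "b - c + 2"
        and g = "\<lambda>j. if j = 0 then b + 2 else if j = 1 then b + 1 else b + 1 - j" and CS = "{}"])
    (use assms in \<open>auto simp: chord_path_adj_def inj_on_def split: if_splits\<close>)

lemma hub_pair_first:
  assumes "z_adj b" "z_adj (Suc b)" "Suc b \<le> L" "odd b" "\<And>a. a < b \<Longrightarrow> \<not> z_adj a"
  shows "(\<exists>ps z'. near_obstruction V E ps z') \<or> (\<exists>C. core_path C)"
proof (cases "has_chord \<and> chord_mid \<le> b")
  case False
  have "\<exists>C. core_path C" by (rule core_prefix_chord_to_hub[of b]) (use assms False in auto)
  then show ?thesis ..
next
  case True
  then consider "chord_mid < b" | "chord_mid = b" by linarith
  then show ?thesis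
  proof cases
    case 1 then show ?thesis using core_prefix_shortcut assms True by blast
  next
    case 2
    then show ?thesis
      using core_prefix_shortcut_chord_to_hub near_tail assms True chord_mid_bounds by (cases "z_adj (b + 2)") auto
  qed
qed

lemma hub_pair_later:
  assumes b: "z_adj b" "z_adj (Suc b)" "Suc b \<le> L" "odd b"
    and c: "z_adj c" "c + 2 \<le> b" "odd c" "\<And>a. c < a \<Longrightarrow> a < b \<Longrightarrow> \<not> z_adj a"
    and odd_hubs: "\<And>a. a < b \<Longrightarrow> z_adj a \<Longrightarrow> odd a"
  shows "(\<exists>ps z'. near_obstruction V E ps z') \<or> (\<exists>C. core_path C)"
proof -
  consider "has_chord \<Longrightarrow> chord_mid \<noteq> Suc c \<and> chord_mid \<noteq> b - 1 \<and> chord_mid \<noteq> b"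
    | "has_chord" "chord_mid = b"
    | "has_chord" "chord_mid = Suc c" "chord_mid = b - 1"
    | "has_chord" "chord_mid = Suc c" "chord_mid \<noteq> b - 1"
    | "has_chord" "chord_mid = b - 1" "chord_mid \<noteq> Suc c"
    by blast
  then show ?thesis
  proof cases
    case 1 then show ?thesis using near_segment_reversed b c by blast
  next
    case 2 then show ?thesis
      using near_skip_chord_to_hub near_tail b c chord_mid_bounds by (cases "z_adj (b + 2)") auto
  next
    case 3
    then have "b = c + 2" using c by simp
    then have "z_adj (c + 3)" "c + 3 \<le> L" using b by (simp_all add: numeral_3_eq_3)
    show ?thesis
    proof (cases "\<exists>a<c. z_adj a")
      case False
      have "\<exists>C. core_path C"
        by (rule core_prefix_skip[of c]) (use b c 3 False \<open>b = c + 2\<close> \<open>z_adj (c + 3)\<close> \<open>c + 3 \<le> L\<close> in auto)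
      then show ?thesis ..
    next
      case True
      then obtain a where "z_adj a" "a < c" by blast
      then obtain e where e: "z_adj e" "e < c" "\<And>x. z_adj x \<Longrightarrow> x < c \<Longrightarrow> x \<le> e"
        by (rule greatest_hub_below) blast
      have "odd e" using odd_hubs e c by simp
      then have "e + 2 \<le> c" using e(2) \<open>odd c\<close> by presburger
      moreover have "\<not> z_adj a" if "e < a" "a < c" for a using e(3)[of a] that by auto
      ultimately have "\<exists>ps z'. near_obstruction V E ps z'"
        using near_skip[of c e] e(1) \<open>odd e\<close> b c 3 \<open>b = c + 2\<close> by auto
      then show ?thesis ..
    qed
  next
    case 4 then show ?thesis using near_segment_chord_at_start b c by blast
  next
    case 5 then show ?thesis using near_segment_reversed_chord_at_end b c by blast
  qed
qed

lemma hub_adjacent_pair: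
  assumes b: "z_adj b" "z_adj (Suc b)" "Suc b \<le> L" "odd b"
    and odd_hubs: "\<And>a. a < b \<Longrightarrow> z_adj a \<Longrightarrow> odd a"
  shows "(\<exists>ps z'. near_obstruction V E ps z') \<or> (\<exists>C. core_path C)"
proof (cases "\<exists>a<b. z_adj a")
  case False then show ?thesis using hub_pair_first b by auto
next
  case True
  then obtain a where "z_adj a" "a < b" by blast
  then obtain c where c: "z_adj c" "c < b" "\<And>x. z_adj x \<Longrightarrow> x < b \<Longrightarrow> x \<le> c"
    by (rule greatest_hub_below) blast
  have "odd c" using odd_hubs c by simp
  then have "c + 2 \<le> b" using c(2) \<open>odd b\<close> by presburger
  moreover have "\<not> z_adj a" if "c < a" "a < b" for a using c(3)[of a] that by auto
  ultimately show ?thesis using hub_pair_later[of b c] b c(1) \<open>odd c\<close> odd_hubs by auto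
qed

theorem hub:
  "(\<exists>ps z'. near_obstruction V E ps z') \<or> (\<exists>C. core_path C)"
proof -
  have "\<exists>a. a \<le> L \<and> z_adj a \<and> even a" using z_adj_last L_even unfolding z_adj_def by blast
  define a0 where "a0 = (LEAST a. a \<le> L \<and> z_adj a \<and> even a)"
  have a0: "a0 \<le> L" "z_adj a0" "even a0"
    using LeastI_ex[OF \<open>\<exists>a. a \<le> L \<and> z_adj a \<and> even a\<close>] unfolding a0_def by auto
  \<comment> \<open>Below the first even-indexed neighbour \<open>a0\<close> of \<open>z\<close> all neighbours have odd index, so the
     subpath between two consecutive ones has odd length.\<close>
  have odd_hubs: "odd a" if "a < a0" "z_adj a" for a
    using not_less_Least[of a "\<lambda>a. a \<le> L \<and> z_adj a \<and> even a"] that a0 unfolding a0_def by auto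
  show ?thesis
  proof (cases "\<exists>a<a0. z_adj a")
    case False then show ?thesis using core_prefix a0 by blast
  next
    case True
    then obtain a where "z_adj a" "a < a0" by blast
    then obtain b where b: "z_adj b" "b < a0" "\<And>x. z_adj x \<Longrightarrow> x < a0 \<Longrightarrow> x \<le> b"
      by (rule greatest_hub_below) blast
    have "odd b" using odd_hubs b by simp
    then have "a0 \<noteq> b + 2" using a0(3) by auto
    then consider "b + 3 \<le> a0" | "a0 = Suc b" using b(2) by linarith
    then show ?thesis
    proof cases
      case 1
      moreover have "\<not> z_adj a" if "b < a" "a < a0" for a using b(3)[of a] that by auto
      ultimately show ?thesis using near_gap[of a0 b] a0 b(1) \<open>odd b\<close> by auto
    next
      case 2
      then show ?thesis using hub_adjacent_pair[of b] a0 b(1,2) \<open>odd b\<close> odd_hubs by auto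
    qed
  qed
qed

end

section \<open>The induction step\<close>

lemma chords_map_cong:
  assumes "\<And>x y. x \<in> set D \<Longrightarrow> y \<in> set D \<Longrightarrow> ES (f x) (f y) = ES' x y"
  shows "chords ES (map f D) = chords ES' D"
  using assms unfolding chords_def by (auto simp: nth_mem)

lemma chords_Cons_snoc:
  assumes "\<not> ES a b" "\<And>k. 0 < k \<Longrightarrow> k < length D \<Longrightarrow> \<not> ES a (D!k)"
    "\<And>j. Suc j < length D \<Longrightarrow> \<not> ES (D!j) b"
  shows "chords ES (a # D @ [b]) = (\<lambda>(j,k). (Suc j, Suc k)) ` chords ES D"
proof (rule set_eqI, rule iffI)
  fix p assume "p \<in> chords ES (a # D @ [b])"
  then obtain j k where p: "p = (j,k)" "j + 2 \<le> k" "k < length D + 2"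
      "ES ((a # D @ [b]) ! j) ((a # D @ [b]) ! k)"
    unfolding chords_def by auto
  have "j \<noteq> 0"
  proof
    assume "j = 0"
    then show False using p assms(1) assms(2)[of "k - 1"] by (cases "k = Suc (length D)") (auto simp: nth_append split: if_splits)
  qed
  moreover have "k \<noteq> Suc (length D)"
  proof
    assume "k = Suc (length D)"
    then show False using p assms(3)[of "j - 1"] \<open>j \<noteq> 0\<close> by (auto simp: nth_append split: if_splits)
  qed
  ultimately have "(j - 1, k - 1) \<in> chords ES D"
    using p unfolding chords_def by (auto simp: nth_append nth_Cons split: nat.splits)
  then show "p \<in> (\<lambda>(j,k). (Suc j, Suc k)) ` chords ES D"
    using p \<open>j \<noteq> 0\<close> by (auto intro!: image_eqI[of _ _ "(j - 1, k - 1)"])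
next
  fix p assume "p \<in> (\<lambda>(j,k). (Suc j, Suc k)) ` chords ES D"
  then show "p \<in> chords ES (a # D @ [b])" unfolding chords_def by (auto simp: nth_append)
qed

lemma gstar_E_Some_Some:
  "u \<in> gstar_rem V col c xs m \<Longrightarrow> w \<in> gstar_rem V col c xs m \<Longrightarrow>
    gstar_E V E col c xs m (Some u) (Some w) \<longleftrightarrow> E u w"
  unfolding gstar_E_def by simp

lemma gstar_E_None_Some:
  "gstar_E V E col c xs m None (Some w) \<longleftrightarrow>
    w \<in> gstar_rem V col c xs m \<and> (\<exists>x\<in>set (take m xs). E x w)"
  unfolding gstar_E_def gstar_w_adj_def by simp

context lexcolor
begin

abbreviation color_class :: "nat \<Rightarrow> 'a list" where
  "color_class c \<equiv> filter (\<lambda>v. col v = c) \<sigma>"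

lemma bad_path_of_core:
  assumes m: "m < length (color_class c)"
    and D: "path_in (gstar_rem V col c (color_class c) m) E D" "even (length D)"
      "at_most_short_chord E D"
    and first: "\<exists>x\<in>set (take m (color_class c)). E x (D!0)"
    and inner: "\<And>j. 0 < j \<Longrightarrow> j < length D \<Longrightarrow> \<not> (\<exists>x\<in>set (take m (color_class c)). E x (D!j))"
    and last: "E (last D) (color_class c ! m)"
      "\<And>j. Suc j < length D \<Longrightarrow> \<not> E (D!j) (color_class c ! m)"
    and notin: "color_class c ! m \<notin> set D"
  shows "bad_path V E col c (color_class c) (Suc m) (None # map Some D @ [Some (color_class c ! m)])"
proof -
  define xs where "xs = color_class c"
  define R where "R = gstar_rem V col c xs m"
  define Q where "Q = None # map Some D @ [Some (xs!m)]"
  let ?gE = "gstar_E V E col c xs m"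
  have DR: "set D \<subseteq> R" and Dne: "D \<noteq> []" using D(1) unfolding path_in_def R_def xs_def by auto
  have "xs!m \<notin> set (take m xs)"
    using m distinct_order unfolding xs_def by (simp add: in_set_conv_nth nth_eq_iff_index_eq)
  then have xmR: "xs!m \<in> R" using m unfolding R_def xs_def gstar_rem_def
    by (auto dest: nth_mem simp: set_order[symmetric])
  have path: "path_in (gstar_V V col c xs m) ?gE Q"
    unfolding path_in_def
  proof (intro conjI allI impI)
    show "distinct Q" "set Q \<subseteq> gstar_V V col c xs m"
      using D(1) notin xmR unfolding Q_def path_in_def gstar_V_def xs_def R_def
      by (auto simp: distinct_map)
    fix j assume j: "Suc j < length Q"
    then consider "j = 0" | "0 < j" "Suc j < Suc (length D)" | "j = length D"
      unfolding Q_def by fastforce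
    then show "?gE (Q!j) (Q!Suc j)"
    proof cases
      case 1 then show ?thesis
        using first Dne DR unfolding Q_def xs_def R_def
        by (auto simp: gstar_E_None_Some nth_append nth_mem)
    next
      case 2
      then obtain j' where j': "j = Suc j'" by (cases j) auto
      then have "D ! j' \<in> R" "D ! Suc j' \<in> R" "E (D ! j') (D ! Suc j')"
        using 2 DR D(1) nth_mem[of j' D] nth_mem[of "Suc j'" D] unfolding path_in_def by auto
      then show ?thesis
        using 2 j' unfolding Q_def R_def xs_def by (simp add: nth_append gstar_E_Some_Some)
    next
      case 3
      have "last D \<in> R" using DR Dne by auto
      then show ?thesis
        using 3 last(1) Dne xmR unfolding Q_def R_def xs_def
        by (simp add: nth_append last_conv_nth gstar_E_Some_Some)
    qed
  qed (simp add: Q_def)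
  have "chords ?gE Q = (\<lambda>(j,k). (Suc j, Suc k)) ` chords ?gE (map Some D)"
    unfolding Q_def
  proof (rule chords_Cons_snoc)
    have xs_c: "\<forall>x\<in>set xs. col x = c" unfolding xs_def by simp
    show "\<not> ?gE None (Some (xs!m))"
    proof
      assume "?gE None (Some (xs!m))"
      then obtain x where "x \<in> set xs" "E x (xs!m)"
        by (auto simp: gstar_E_None_Some dest: in_set_takeD)
      then show False using col_proper xs_c m nth_mem unfolding xs_def by metis
    qed
    show "\<not> ?gE None (map Some D ! k)" if "0 < k" "k < length (map Some D)" for k
      using inner[of k] that by (simp add: gstar_E_None_Some xs_def)
    show "\<not> ?gE (map Some D ! j) (Some (xs!m))" if "Suc j < length (map Some D)" for j
    proof -
      have "D ! j \<in> R" using DR nth_mem[of j D] that by auto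
      then show ?thesis using last(2)[of j] that xmR unfolding R_def xs_def
        by (simp add: gstar_E_Some_Some)
    qed
  qed
  moreover have "chords ?gE (map Some D) = chords E D"
    using DR unfolding R_def by (intro chords_map_cong gstar_E_Some_Some) auto
  ultimately have chords_Q: "chords ?gE Q = (\<lambda>(j,k). (Suc j, Suc k)) ` chords E D" by simp
  from D(3) consider "chords E D = {}"
    | t where "0 < t" "t + 2 \<le> length D" "chords E D = {(t - 1, t + 1)}"
    unfolding at_most_short_chord_def by blast
  then have "chord_ok ?gE Q 1"
  proof cases
    case 1 then show ?thesis using chords_Q unfolding chord_ok_def by simp
  next
    case (2 t) then show ?thesis
      using chords_Q unfolding chord_ok_def Q_def by (intro disjI2 exI[of _ "Suc t"]) auto
  qed
  then show ?thesis
    using path D(2) Dne unfolding bad_path_def Q_def xs_def by auto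
qed

end

lemma take_filter_nth:
  assumes "distinct xs" "m < length (filter P xs)" "q < length xs" "xs ! q = filter P xs ! m"
  shows "take m (filter P xs) = filter P (take q xs)"
proof -
  have "xs = take q xs @ xs ! q # drop (Suc q) xs"
    using assms(3) by (simp add: id_take_nth_drop)
  moreover have "P (xs ! q)" using assms(2,4) nth_mem[OF assms(2)] by simp
  ultimately have split: "filter P xs = filter P (take q xs) @ xs ! q # filter P (drop (Suc q) xs)"
    by (metis filter.simps(2) filter_append)
  let ?l = "length (filter P (take q xs))"
  have "?l < length (filter P xs)" using split by simp
  moreover have "filter P xs ! ?l = filter P xs ! m"
    using split assms(4) by (metis nth_append_length)
  ultimately have "?l = m" using nth_eq_iff_index_eq[of "filter P xs"] assms(1,2) by simp
  then show ?thesis using split by simp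
qed

(* The bad path is ps = [w, v 0, ..., v L] with v L = xi = x_i, and X = [x_1, ..., x_(i-1)].
   Its chord, if any (has_chord), joins v (chord_mid - 1) and v (chord_mid + 1). *)
locale bad_path_step = lexcolor +
  fixes c i :: nat and ps :: "'a option list"
  assumes i_bounds: "2 \<le> i" "i \<le> length (color_class c)"
    and bad: "bad_path V E col c (color_class c) i ps"
begin

abbreviation "xs \<equiv> color_class c"
abbreviation "R \<equiv> gstar_rem V col c xs (i - 1)"
abbreviation "gE \<equiv> gstar_E V E col c xs (i - 1)"

definition X :: "'a list" where "X = take (i - 1) xs"
definition xi :: 'a where "xi = xs ! (i - 1)"
definition L :: nat where "L = length ps - 2"
definition v :: "nat \<Rightarrow> 'a" where "v a = the (ps ! Suc a)"
definition has_chord :: bool where "has_chord \<longleftrightarrow> chords gE ps \<noteq> {}"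
definition chord_mid :: nat where "chord_mid = fst (the_elem (chords gE ps))"

lemma path_ps: "path_in (gstar_V V col c xs (i - 1)) gE ps"
  and ps_first: "ps ! 0 = None" and ps_last: "last ps = Some xi"
  and chord_ok_ps: "chord_ok gE ps 1"
  using bad unfolding bad_path_def xi_def by auto

lemma length_ps: "length ps = L + 2" and L_even: "even L"
proof -
  have "length ps \<noteq> 0" "odd (length ps - 1)" using bad unfolding bad_path_def path_in_def by auto
  then have "2 \<le> length ps" "even (length ps)" by presburger+
  then show "length ps = L + 2" "even L" unfolding L_def by auto
qed

lemma xi_in: "xi \<in> set xs" "col xi = c" "xi \<in> V"
  using i_bounds nth_mem[of "i - 1" xs] set_order unfolding xi_def by auto

lemma X_in: "x \<in> set X \<Longrightarrow> x \<in> set xs \<and> col x = c \<and> x \<in> V"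
  unfolding X_def using set_order by (auto dest: in_set_takeD)

lemma ps_Suc: assumes "a \<le> L" shows "ps ! Suc a = Some (v a)" "v a \<in> R"
proof -
  have a: "Suc a < length ps" using assms length_ps by simp
  then have "ps ! Suc a \<noteq> ps ! 0"
    using path_ps nth_eq_iff_index_eq[of ps "Suc a" 0] unfolding path_in_def by auto
  moreover have "ps ! Suc a \<in> gstar_V V col c xs (i - 1)"
    using path_ps a nth_mem unfolding path_in_def by blast
  ultimately show "ps ! Suc a = Some (v a)" "v a \<in> R"
    using ps_first unfolding gstar_V_def v_def by auto
qed

lemma v_props: "a \<le> L \<Longrightarrow> v a \<in> V \<and> c \<le> col (v a) \<and> v a \<notin> set X"
  using ps_Suc(2) unfolding gstar_rem_def X_def by auto

lemma v_last: "v L = xi"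
proof -
  have "ps \<noteq> []" using length_ps by auto
  then show ?thesis using ps_last ps_Suc(1)[of L] length_ps by (simp add: last_conv_nth)
qed

lemma v_inj: "inj_on v {..L}"
proof (rule inj_onI)
  fix a b assume "a \<in> {..L}" "b \<in> {..L}" "v a = v b"
  then show "a = b"
    using ps_Suc(1) path_ps length_ps nth_eq_iff_index_eq[of ps "Suc a" "Suc b"]
    unfolding path_in_def by auto
qed

lemma chords_ps: "chords gE ps = (if has_chord then {(chord_mid, chord_mid + 2)} else {})"
  and chord_mid_bounds: "has_chord \<Longrightarrow> 1 \<le> chord_mid \<and> chord_mid + 2 \<le> L"
proof -
  from chord_ok_ps consider "chords gE ps = {}"
    | t where "1 < t" "t + 2 < length ps" "chords gE ps = {(t - 1, t + 1)}"
    unfolding chord_ok_def by blast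
  then have "(has_chord \<longrightarrow> 1 \<le> chord_mid \<and> chord_mid + 2 \<le> L) \<and> chords gE ps = (if has_chord then {(chord_mid, chord_mid + 2)} else {})"
    by cases (auto simp: has_chord_def chord_mid_def length_ps)
  then show "chords gE ps = (if has_chord then {(chord_mid, chord_mid + 2)} else {})" "has_chord \<Longrightarrow> 1 \<le> chord_mid \<and> chord_mid + 2 \<le> L"
    by auto
qed

lemma chord_iff:
  assumes "j + 2 \<le> k" "k < length ps"
  shows "gE (ps ! j) (ps ! k) \<longleftrightarrow> has_chord \<and> j = chord_mid \<and> k = chord_mid + 2"
  using assms chords_ps unfolding chords_def by (auto split: if_splits)

lemma gE_X_iff: "gE None (Some u) \<longleftrightarrow> u \<in> R \<and> (\<exists>x\<in>set X. E x u)"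
  unfolding X_def by (rule gstar_E_None_Some)

lemma X_not_adj: assumes "1 \<le> a" "a \<le> L" "x \<in> set X" shows "\<not> E x (v a)"
proof
  assume "E x (v a)"
  then have "gE None (Some (v a))" using gE_X_iff ps_Suc(2)[OF assms(2)] assms(3) by blast
  then have "gE (ps ! 0) (ps ! Suc a)" using ps_first ps_Suc(1)[OF assms(2)] by simp
  then have "has_chord \<and> chord_mid = 0" using chord_iff[of 0 "Suc a"] assms(1,2) length_ps by simp
  then show False using chord_mid_bounds by simp
qed

lemma X_adj_v0: "\<exists>x\<in>set X. E x (v 0)"
proof -
  have "gE (ps ! 0) (ps ! 1)" using path_ps length_ps unfolding path_in_def by auto
  then show ?thesis using ps_first ps_Suc[of 0] gE_X_iff by simp
qed

lemma v_adj: assumes "a \<le> L" "b \<le> L" shows "E (v a) (v b) \<longleftrightarrow> chord_path_adj has_chord chord_mid a b"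
proof -
  have adj_lt: "E (v a) (v b) \<longleftrightarrow> b = Suc a \<or> (has_chord \<and> Suc a = chord_mid \<and> b = Suc chord_mid)"
    if "a < b" "b \<le> L" for a b
  proof (cases "b = Suc a")
    case True
    then have "gE (ps ! Suc a) (ps ! Suc b)" using path_ps that length_ps unfolding path_in_def by auto
    then show ?thesis
      using True that ps_Suc(1) gstar_E_Some_Some[OF ps_Suc(2)[of a] ps_Suc(2)[of b]] by simp
  next
    case False
    then have "gE (ps ! Suc a) (ps ! Suc b) \<longleftrightarrow> has_chord \<and> Suc a = chord_mid \<and> b = Suc chord_mid"
      using chord_iff(1)[of "Suc a" "Suc b"] that length_ps by auto
    then show ?thesis
      using False that ps_Suc(1) gstar_E_Some_Some[OF ps_Suc(2)[of a] ps_Suc(2)[of b]] by simp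
  qed
  consider "a < b" | "a = b" | "b < a" by linarith
  then show ?thesis
  proof cases
    case 1 then show ?thesis using adj_lt[OF 1 assms(2)] unfolding chord_path_adj_def by auto
  next
    case 2 then show ?thesis using irrefl unfolding chord_path_adj_def by auto
  next
    case 3
    have "E (v a) (v b) \<longleftrightarrow> E (v b) (v a)" using sym by blast
    then show ?thesis using adj_lt[OF 3 assms(1)] 3 unfolding chord_path_adj_def by auto
  qed
qed

lemma L_ge: "2 \<le> L"
proof (rule ccontr)
  assume "\<not> 2 \<le> L"
  then have "L = 0" using L_even by presburger
  then have "v 0 = xi" using v_last by simp
  then obtain x where "x \<in> set X" "E x xi" using X_adj_v0 by auto
  then show False using X_in[of x] xi_in(2) col_proper[of x xi] by simp
qed

lemma col_v0: "c < col (v 0)"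
proof -
  obtain x where "x \<in> set X" "E x (v 0)" using X_adj_v0 by blast
  then have "col (v 0) \<noteq> c" using X_in[of x] col_proper[of x "v 0"] by simp
  then show ?thesis using v_props[of 0] by simp
qed

lemma v0_not_adj_last: "\<not> E (v 0) (v L)"
  using v_adj[of 0 L] L_ge chord_mid_bounds unfolding chord_path_adj_def by auto

definition s :: nat where "s = (LEAST k. \<sigma> ! k = xi)"

lemma s_pos: "s < n" "\<sigma> ! s = xi"
proof -
  obtain k where "k < n" "\<sigma> ! k = xi" using position xi_in(3) by blast
  then show "s < n" "\<sigma> ! s = xi"
    using LeastI[of "\<lambda>k. \<sigma> ! k = xi" k] Least_le[of "\<lambda>k. \<sigma> ! k = xi" k] unfolding s_def by auto
qed

lemma in_X_iff: "u \<in> set X \<longleftrightarrow> (\<exists>j<s. \<sigma> ! j = u) \<and> col u = c"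
proof -
  have "X = filter (\<lambda>v. col v = c) (take s \<sigma>)"
    using take_filter_nth[OF distinct_order, of "i - 1" _ s] i_bounds s_pos
    unfolding X_def xi_def by simp
  then show ?thesis using s_pos by (auto simp: in_set_conv_nth)
qed

lemma xi_no_c_neighbour: "\<forall>j<s. E (\<sigma>!j) (\<sigma>!s) \<longrightarrow> col (\<sigma>!j) \<noteq> c"
proof (intro allI impI)
  fix j assume "E (\<sigma>!j) (\<sigma>!s)"
  then have "col (\<sigma>!j) \<noteq> col (\<sigma>!s)" by (rule col_proper)
  then show "col (\<sigma>!j) \<noteq> c" using s_pos(2) xi_in(2) by simp
qed

lemma c_pos: "0 < c"
  using col_pos[OF xi_in(3)] xi_in(2) by simp

lemma earlier_higher_has_X_neighbour:
  assumes "j < s" "c < col (\<sigma>!j)"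
  shows "\<exists>x\<in>set X. E x (\<sigma>!j)"
proof -
  obtain j' where "j' < j" "E (\<sigma>!j') (\<sigma>!j)" "col (\<sigma>!j') = c"
    using smaller_color_on_earlier_neighbour[of j c] c_pos assms s_pos by auto
  moreover have "j' < s" using \<open>j' < j\<close> assms(1) by simp
  ultimately have "\<sigma>!j' \<in> set X" unfolding in_X_iff by blast
  then show ?thesis using \<open>E (\<sigma>!j') (\<sigma>!j)\<close> by blast
qed

lemma inner_v_after_xi:
  assumes "1 \<le> a" "a < L" "q < n" "\<sigma> ! q = v a"
  shows "s < q"
proof -
  have "q \<noteq> s" using assms s_pos v_last inj_onD[OF v_inj, of a L] by auto
  moreover have "\<not> q < s"
  proof
    assume "q < s"
    then have "v a \<notin> set X" using v_props[of a] assms by simp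
    then have "col (v a) \<noteq> c" using in_X_iff \<open>q < s\<close> assms(4) by blast
    then have "c < col (\<sigma> ! q)" using v_props[of a] assms by simp
    then obtain x where "x \<in> set X" "E x (v a)"
      using earlier_higher_has_X_neighbour[OF \<open>q < s\<close>] assms(4) by auto
    then show False using X_not_adj[of a x] assms(1,2) by simp
  qed
  ultimately show ?thesis by simp
qed

definition hub_candidate :: "'a \<Rightarrow> bool" where
  "hub_candidate z \<longleftrightarrow> z \<in> V \<and> c < col z \<and> (\<exists>x\<in>set X. E x z) \<and> E z xi"

lemma hub_candidate_nth:
  assumes "j < s" "E (\<sigma>!j) (\<sigma>!s)" "c < col (\<sigma>!j)"
  shows "hub_candidate (\<sigma>!j)"
proof -
  have "\<sigma>!j \<in> V" using assms(1) s_pos(1) set_order nth_mem[of j \<sigma>] by simp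
  then show ?thesis
    unfolding hub_candidate_def using earlier_higher_has_X_neighbour[OF assms(1,3)] assms s_pos(2)
    by simp
qed

lemma hub_candidate_off_path:
  assumes "hub_candidate z" "a \<le> L"
  shows "z \<noteq> v a"
proof
  assume "z = v a"
  show False
  proof (cases "a = 0")
    case True
    then show False using assms(1) \<open>z = v a\<close> v0_not_adj_last v_last unfolding hub_candidate_def by simp
  next
    case False
    then show False using assms \<open>z = v a\<close> X_not_adj[of a] unfolding hub_candidate_def by auto
  qed
qed

(* Here LexColor's preference for x_i = \<sigma>!s over v 0, or (if v 0 was coloured earlier) over the
   later-coloured v 1 or v 2, is used. *)
lemma hub_vertex:
  "\<exists>z. hub_candidate z \<and>
     (\<not> E z (v 0) \<or> (\<not> E (v 0) (v 2) \<and> \<not> E z (v 1)) \<or> (E (v 0) (v 2) \<and> \<not> E z (v 2)))"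
proof -
  obtain q0 where q0: "q0 < n" "\<sigma> ! q0 = v 0" using position v_props[of 0] by blast
  have "q0 \<noteq> s" using q0 s_pos v_last inj_onD[OF v_inj, of 0 L] L_ge by auto
  then consider "s < q0" | "q0 < s" by linarith
  then show ?thesis
  proof cases
    case 1
    obtain x where x: "x \<in> set X" "E x (v 0)" using X_adj_v0 by blast
    then obtain jx where "jx < s" "\<sigma>!jx = x" "col x = c" using in_X_iff by blast
    then have "E (\<sigma>!jx) (\<sigma>!q0) \<and> col (\<sigma>!jx) = c" using x(2) q0(2) by simp
    then have "\<exists>j<s. E (\<sigma>!j) (\<sigma>!q0) \<and> col (\<sigma>!j) = c" using \<open>jx < s\<close> by blast
    then obtain j where j: "j < s" "E (\<sigma>!j) (\<sigma>!s)" "c < col (\<sigma>!j)" "\<not> E (\<sigma>!j) (\<sigma>!q0)"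
      using lex_neighbour_missing_color[OF 1 q0(1) xi_no_c_neighbour] by blast
    then show ?thesis using hub_candidate_nth[OF j(1-3)] q0(2) by auto
  next
    case 2
    define a where "a = (if E (v 0) (v 2) then 2 else 1 :: nat)"
    have "1 \<le> a \<and> a < L \<and> E (v 0) (v a)"
    proof (cases "E (v 0) (v 2)")
      case True
      then have "has_chord \<and> chord_mid = 1" using v_adj[of 0 2] L_ge unfolding chord_path_adj_def by auto
      then show ?thesis using True chord_mid_bounds unfolding a_def by simp
    next
      case False
      then show ?thesis using L_ge v_adj[of 0 1] unfolding a_def chord_path_adj_def by simp
    qed
    then have a: "1 \<le> a" "a < L" "E (v 0) (v a)" by simp_all
    have "v a \<in> V" using v_props[of a] a(2) by simp
    then obtain q where q: "q < n" "\<sigma> ! q = v a" using position by blast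
    then have "s < q" using inner_v_after_xi a by blast
    moreover have "1 \<le> c" using c_pos by simp
    moreover have "\<not> E (\<sigma>!q0) (\<sigma>!s)" using v0_not_adj_last v_last q0 s_pos by simp
    moreover have "E (\<sigma>!q0) (\<sigma>!q)" "c < col (\<sigma>!q0)" using a(3) q q0 col_v0 by simp_all
    ultimately obtain j where j: "j < s" "E (\<sigma>!j) (\<sigma>!s)" "c < col (\<sigma>!j)"
        "\<not> E (\<sigma>!j) (\<sigma>!q) \<or> \<not> E (\<sigma>!j) (\<sigma>!q0)"
      using lex_neighbour_missing_vertex[OF _ q(1) _ xi_no_c_neighbour 2] by blast
    note j(4)[unfolded q(2) q0(2)]
    then show ?thesis using hub_candidate_nth[OF j(1-3)] unfolding a_def
      by (cases "E (v 0) (v 2)") auto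
  qed
qed

lemma near_obstruction_through_X:
  assumes z: "hub_candidate z"
    and z_v: "\<not> E z (v 0) \<or> (\<not> E (v 0) (v 2) \<and> \<not> E z (v 1)) \<or> (E (v 0) (v 2) \<and> \<not> E z (v 2))"
    and x: "x \<in> set X" "E x (v 0)" "E x z"
  shows "\<exists>ps z. near_obstruction V E ps z"
proof -
  define f where "f j = (if j = 0 then x else v (j - 1))" for j
  define CS where "CS = (if has_chord then {(chord_mid, chord_mid + 2)} else {})"
  have x_off: "x \<noteq> v a" if "a \<le> L" for a using x(1) v_props[OF that] by auto
  have f_adj: "E (f j) (f k) \<longleftrightarrow> (k = Suc j \<or> (has_chord \<and> j = chord_mid \<and> k = chord_mid + 2))"
    if "j < k" "k < L + 2" for j k
  proof (cases "j = 0")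
    case True
    show ?thesis
    proof (cases "k = 1")
      case False
      then have "\<not> E x (v (k - 1))" using X_not_adj[of "k - 1" x] x(1) that by simp
      then show ?thesis using True False that chord_mid_bounds unfolding f_def by auto
    qed (use True x(2) in \<open>simp add: f_def\<close>)
  next
    case False
    then show ?thesis using that v_adj[of "j - 1" "k - 1"] unfolding f_def chord_path_adj_def by auto
  qed
  have z_props: "z \<in> V" "c < col z" "E z xi" using z unfolding hub_candidate_def by auto
  have "near_obstruction V E (map f [0..<L + 2]) z"
  proof (rule near_obstructionI[where CS = CS])
    show "4 \<le> L + 2" "even (L + 2)" using L_ge L_even by auto
    show "inj_on f {..<L + 2}"
    proof (rule inj_onI)
      fix j k assume jk: "j \<in> {..<L + 2}" "k \<in> {..<L + 2}" and "f j = f k"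
      show "j = k"
      proof (cases "j = 0 \<or> k = 0")
        case True
        have "j - 1 \<le> L" "k - 1 \<le> L" using jk by auto
        then show ?thesis using True \<open>f j = f k\<close> x_off[of "j - 1"] x_off[of "k - 1"]
          unfolding f_def by (auto split: if_splits)
      next
        case False
        then have "v (j - 1) = v (k - 1)" using \<open>f j = f k\<close> unfolding f_def by simp
        then have "j - 1 = k - 1" using inj_onD[OF v_inj] jk by simp
        then show ?thesis using False by linarith
      qed
    qed
    show "f j \<in> V" if "j < L + 2" for j
      using that x(1) X_in[of x] v_props[of "j - 1"] unfolding f_def by auto
    show "E (f j) (f (Suc j))" if "Suc j < L + 2" for j
      using f_adj[of j "Suc j"] that by simp
    show "z \<in> V" by (fact z_props(1))
    show "z \<noteq> f j" if "j < L + 2" for j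
      using that z_props(2) hub_candidate_off_path[OF z, of "j - 1"] X_in[of x] x(1)
      unfolding f_def by auto
    show "E z (f 0)" using x(3) sym unfolding f_def by simp
    show "E z (f (L + 2 - 1))" using z_props(3) v_last unfolding f_def by simp
    show "{(j,k). j + 2 \<le> k \<and> k < L + 2 \<and> E (f j) (f k)} = CS"
      using f_adj chord_mid_bounds unfolding CS_def by auto
    show "CS = {} \<or> (\<exists>t. 0 < t \<and> t + 2 < L + 2 \<and> CS = {(t - 1, t + 1)})"
      using chord_mid_bounds unfolding CS_def by (cases has_chord) (auto intro!: exI[of _ "chord_mid + 1"])
    have "(1, 3) \<in> CS \<longleftrightarrow> E (v 0) (v 2)" "E (v 0) (v 2) \<Longrightarrow> CS = {(1, 3)}"
      using v_adj[of 0 2] L_ge chord_mid_bounds unfolding CS_def chord_path_adj_def by auto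
    moreover have "(0, 2) \<notin> CS" "f 1 = v 0" "f 2 = v 1" "f 3 = v 2"
      using chord_mid_bounds unfolding CS_def f_def by (auto simp: numeral_eq_Suc)
    ultimately show "(CS = {(0,2)} \<and> \<not> E z (f 1) \<and> \<not> E z (f 2))
       \<or> (CS = {(1,3)} \<and> (\<not> E z (f 1) \<or> \<not> E z (f 3)))
       \<or> ((0,2) \<notin> CS \<and> \<not> E z (f 1)) \<or> ((0,2) \<notin> CS \<and> (1,3) \<notin> CS \<and> E z (f 1) \<and> \<not> E z (f 2))"
      using z_v by auto
  qed
  then show ?thesis by blast
qed

lemma in_X_nth: "u \<in> set X \<longleftrightarrow> (\<exists>a<i - 1. xs ! a = u)"
  using i_bounds unfolding X_def by (auto simp: in_set_conv_nth)

lemma first_X_neighbour: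
  assumes "\<exists>x\<in>set X. E x u"
  shows "\<exists>m<i - 1. E (xs!m) u \<and> (\<forall>a<m. \<not> E (xs!a) u)"
proof -
  let ?P = "\<lambda>m. m < i - 1 \<and> E (xs!m) u"
  obtain x where "x \<in> set X" "E x u" using assms by blast
  then obtain a where "a < i - 1" "xs ! a = x" unfolding in_X_nth by blast
  then have "?P a" using \<open>E x u\<close> by simp
  then have least: "?P (LEAST m. ?P m)" by (rule LeastI)
  have below: "\<not> E (xs!a) u" if "a < (LEAST m. ?P m)" for a
  proof
    assume "E (xs!a) u"
    then have "?P a" using that least by simp
    then show False using not_less_Least[OF that] by blast
  qed
  show ?thesis
  proof (intro exI conjI allI impI)
    show "(LEAST m. ?P m) < i - 1" using least by (rule conjunct1)
    show "E (xs ! (LEAST m. ?P m)) u" using least by (rule conjunct2)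
    show "\<not> E (xs!a) u" if "a < (LEAST m. ?P m)" for a using below[OF that] .
  qed
qed

lemma core_interior:
  assumes D: "path_in (v ` {..L} \<union> {z}) E D" "{D!0, last D} = {v 0, z}"
    and j: "0 < j" "Suc j < length D"
  shows "\<exists>b. 1 \<le> b \<and> b \<le> L \<and> D!j = v b"
proof -
  have "D!j \<noteq> D!0" "D!j \<noteq> last D"
    using D(1) j nth_eq_iff_index_eq[of D j 0] nth_eq_iff_index_eq[of D j "length D - 1"]
    unfolding path_in_def by (auto simp: last_conv_nth)
  moreover have "D!j \<in> set D" using j by simp
  then have "D!j \<in> v ` {..L} \<union> {z}" using D(1) unfolding path_in_def by blast
  ultimately have "D!j \<notin> {v 0, z}" "D!j \<in> v ` {..L} \<union> {z}" using D(2)[symmetric] by simp_all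
  then obtain b where "b \<le> L" "D!j = v b" "b \<noteq> 0" by auto
  then show ?thesis by (intro exI[of _ b]) simp
qed

lemma shorter_bad_path:
  assumes z: "hub_candidate z" and no_common: "\<not> (\<exists>x\<in>set X. E x (v 0) \<and> E x z)"
    and D: "path_in (v ` {..L} \<union> {z}) E D" "even (length D)" "at_most_short_chord E D"
      "{D!0, last D} = {v 0, z}"
    and m: "m < i - 1" "E (xs!m) (last D)" "\<And>a. a < m \<Longrightarrow> \<not> E (xs!a) (last D)"
      "\<exists>a<m. E (xs!a) (D!0)"
  shows "bad_path V E col c xs (Suc m) (None # map Some D @ [Some (xs!m)])"
proof (rule bad_path_of_core)
  have z_props: "z \<in> V" "c < col z" "z \<notin> set X" using z X_in unfolding hub_candidate_def by auto
  have take_X: "set (take m xs) \<subseteq> set X" unfolding X_def using m(1) by (simp add: set_take_subset_set_take)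
  have xm_X: "xs!m \<in> set X" using in_X_nth m(1) by blast
  show "m < length xs" using m(1) i_bounds by simp
  have "v ` {..L} \<union> {z} \<subseteq> gstar_rem V col c xs m"
    using v_props z_props take_X X_in unfolding gstar_rem_def by auto
  then show "path_in (gstar_rem V col c xs m) E D"
    using D(1) subset_trans unfolding path_in_def by blast
  show "even (length D)" "at_most_short_chord E D" by (fact D(2), fact D(3))
  obtain a where "a < m" "E (xs!a) (D!0)" using m(4) by blast
  moreover have "xs!a \<in> set (take m xs)"
    using \<open>a < m\<close> m(1) i_bounds nth_mem[of a "take m xs"] by simp
  ultimately show "\<exists>x\<in>set (take m xs). E x (D!0)" by blast
  show "\<not> (\<exists>x\<in>set (take m xs). E x (D!j))" if j: "0 < j" "j < length D" for j
  proof (cases "Suc j = length D")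
    case True
    moreover have "D \<noteq> []" using that by auto
    ultimately have "D!j = last D" by (simp add: last_conv_nth del: One_nat_def) (metis diff_Suc_1)
    then show ?thesis using m(3) by (auto simp: in_set_conv_nth)
  next
    case False
    then have "Suc j < length D" using j by simp
    then obtain b where "1 \<le> b" "b \<le> L" "D!j = v b" using core_interior[OF D(1,4) j(1)] by auto
    then show ?thesis using X_not_adj take_X by auto
  qed
  show "E (last D) (xs!m)" using m(2) sym by blast
  show "\<not> E (D!j) (xs!m)" if j: "Suc j < length D" for j
  proof (cases "j = 0")
    case True
    have "D!0 \<noteq> last D"
      using D(1) j nth_eq_iff_index_eq[of D 0 "length D - 1"] unfolding path_in_def
      by (auto simp: last_conv_nth)
    then have "(D!0 = v 0 \<and> last D = z) \<or> (D!0 = z \<and> last D = v 0)"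
      using D(4) by (auto simp: doubleton_eq_iff)
    show ?thesis
    proof
      assume "E (D!j) (xs!m)"
      then have "E (xs!m) (D!0)" using True sym by simp
      then show False
        using \<open>(D!0 = v 0 \<and> last D = z) \<or> (D!0 = z \<and> last D = v 0)\<close> m(2) no_common xm_X by auto
    qed
  next
    case False
    then obtain b where b: "1 \<le> b" "b \<le> L" "D!j = v b" using core_interior[OF D(1,4) _ j] by auto
    show ?thesis
    proof
      assume "E (D!j) (xs!m)"
      then have "E (xs!m) (v b)" using b(3) sym by simp
      then show False using X_not_adj[OF b(1,2) xm_X] by simp
    qed
  qed
  show "xs!m \<notin> set D"
  proof
    assume "xs!m \<in> set D"
    then have "xs!m \<in> v ` {..L} \<union> {z}" using D(1) unfolding path_in_def by blast
    then obtain b where "b \<le> L" "xs!m = v b" using xm_X z_props(3) by auto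
    then show False using v_props[of b] xm_X by simp
  qed
qed

lemma near_obstruction_or_shorter_bad_path:
  "(\<exists>ps z. near_obstruction V E ps z) \<or> (\<exists>k ps'. 2 \<le> k \<and> k < i \<and> bad_path V E col c xs k ps')"
proof -
  obtain z where z: "hub_candidate z"
    and z_v: "\<not> E z (v 0) \<or> (\<not> E (v 0) (v 2) \<and> \<not> E z (v 1)) \<or> (E (v 0) (v 2) \<and> \<not> E z (v 2))"
    using hub_vertex by blast
  show ?thesis
  proof (cases "\<exists>x\<in>set X. E x (v 0) \<and> E x z")
    case True then show ?thesis using near_obstruction_through_X[OF z z_v] by blast
  next
    case False
    interpret hub_path: chorded_path_hub V E v L has_chord chord_mid z
    proof
      show "E b a" if "E a b" for a b using sym[OF that] .
      show "v a \<in> V" if "a \<le> L" for a using v_props[OF that] by blast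
      show "z \<in> V" "E z (v L)" using z v_last unfolding hub_candidate_def by simp_all
      show "z \<noteq> v a" if "a \<le> L" for a using hub_candidate_off_path[OF z that] .
      show "E (v a) (v b) \<longleftrightarrow> chord_path_adj has_chord chord_mid a b" if "a \<le> L" "b \<le> L" for a b
        using v_adj[OF that] .
    qed (fact L_even, fact L_ge, fact v_inj, fact chord_mid_bounds)
    from hub_path.hub consider "\<exists>ps z. near_obstruction V E ps z" | C where "hub_path.core_path C" by blast
    then show ?thesis
    proof cases
      case (2 C)
      then have C: "path_in (v ` {..L} \<union> {z}) E C" "even (length C)" "at_most_short_chord E C"
          "C!0 = v 0" "last C = z"
        unfolding hub_path.core_path_def by auto
      \<comment> \<open>The end of the core with the earlier colour-\<open>c\<close> neighbour becomes its start.\<close>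
      obtain mv where mv: "mv < i - 1" "E (xs!mv) (v 0)" "\<And>a. a < mv \<Longrightarrow> \<not> E (xs!a) (v 0)"
        using first_X_neighbour[OF X_adj_v0] by blast
      have "\<exists>x\<in>set X. E x z" using z unfolding hub_candidate_def by blast
      then obtain mz where mz: "mz < i - 1" "E (xs!mz) z" "\<And>a. a < mz \<Longrightarrow> \<not> E (xs!a) z"
        using first_X_neighbour by blast
      have "mv \<noteq> mz" using False mv mz in_X_nth by blast
      then consider "mv < mz" | "mz < mv" by linarith
      then show ?thesis
      proof cases
        case 1
        have "bad_path V E col c xs (Suc mz) (None # map Some C @ [Some (xs!mz)])"
          by (rule shorter_bad_path[OF z False]) (use C mz mv 1 in auto)
        then show ?thesis using 1 mz(1) by (intro disjI2 exI conjI) auto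
      next
        case 2
        have "C \<noteq> []" using C(1) unfolding path_in_def by simp
        then have "rev C ! 0 = z" "last (rev C) = v 0" using C(4,5) by (simp_all add: hd_conv_nth last_rev rev_nth last_conv_nth)
        then have "bad_path V E col c xs (Suc mv) (None # map Some (rev C) @ [Some (xs!mv)])"
          using C mz mv 2 path_in_rev[OF sym C(1)] at_most_short_chord_rev[OF sym C(3)]
          by (intro shorter_bad_path[OF z False]) auto
        then show ?thesis using 2 mv(1) by (intro disjI2 exI conjI) auto
      qed
    qed blast
  qed
qed

end

theorem lemma1:
  fixes V :: "'a set" and E :: "'a \<Rightarrow> 'a \<Rightarrow> bool" and \<sigma> :: "'a list"
    and col :: "'a \<Rightarrow> nat" and q :: "nat \<Rightarrow> 'a" and c i :: nat
  assumes "graph V E"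
    and "lexcolor_run V E \<sigma> col"
    and "clique_run V E col (card (col ` V)) q"
    and "clique_first_fail E (card (col ` V)) q c"
    and "2 \<le> i" and "i \<le> length (filter (\<lambda>v. col v = c) \<sigma>)"
    and "\<exists>ps. bad_path V E col c (filter (\<lambda>v. col v = c) \<sigma>) i ps"
  shows "\<exists>ps z. near_obstruction V E ps z"
proof -
  have "\<exists>ps z. near_obstruction V E ps z"
    if "2 \<le> k" "k \<le> length (filter (\<lambda>v. col v = c) \<sigma>)"
      "bad_path V E col c (filter (\<lambda>v. col v = c) \<sigma>) k ps" for k ps
    using that
  proof (induction k arbitrary: ps rule: less_induct)
    case (less k)
    interpret bad_path_step V E \<sigma> col c k ps
      using assms(1,2) less.prems by unfold_locales
    show ?case
      using near_obstruction_or_shorter_bad_path less.IH less.prems(2) by fastforce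
  qed
  then show ?thesis using assms(5-7) by blast
qed

end
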